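(* Let $A,Q\in\mathbb{R}^{n\times n}$, $B,L\in\mathbb{R}^{n\times m}$, $R\in\mathbb{R}^{m\times m}$, and $A_0^i\in\mathbb{R}^{n\times n}$, $B_0^i\in\mathbb{R}^{n\times m}$ for $i=1,\dots,r$, such that $R\succ 0$ and $\begin{bmatrix} Q & L\\ L^{\mathsf T} & R\end{bmatrix}\succeq 0$ (symmetric positive semidefinite). Suppose that $$\mathcal N(Q-LR^{-1}L^{\mathsf T})\subseteq \mathcal N(L^{\mathsf T})\cap\bigcap_{i=1}^r\mathcal N(A_0^i).$$ If $(Q-LR^{-1}L^{\mathsf T},A)$ is detectable, then for every symmetric positive semidefinite $\widetilde X\in\mathbb{R}^{n\times n}$ the pair $\big(H_{\mathrm c}(\widetilde X),A_{\mathrm c}(\widetilde X)\big)$ is detectable and $H_{\mathrm c}(\widetilde X)\succeq 0$.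
   Context: $\mathcal N(\cdot)$ denotes the null space. For symmetric $X\in\mathbb{R}^{n\times n}$ define $\Pi_{11}(X)=\sum_{i=1}^r (A_0^i)^{\mathsf T}XA_0^i$, $\Pi_{12}(X)=\sum_{i=1}^r (A_0^i)^{\mathsf T}XB_0^i$, $\Pi_{22}(X)=\sum_{i=1}^r (B_0^i)^{\mathsf T}XB_0^i$, $L_{\mathrm c}(X)=L+\Pi_{12}(X)$, $R_{\mathrm c}(X)=R+\Pi_{22}(X)$, $Q_{\mathrm c}(X)=Q+\Pi_{11}(X)$, $A_{\mathrm c}(X)=A-B[R_{\mathrm c}(X)]^{-1}[L_{\mathrm c}(X)]^{\mathsf T}$, $H_{\mathrm c}(X)=Q_{\mathrm c}(X)-L_{\mathrm c}(X)[R_{\mathrm c}(X)]^{-1}[L_{\mathrm c}(X)]^{\mathsf T}$. A pair $(H,A)$ of $n\times n$ matrices is detectable if there is no nonzero $z\in\mathbb{C}^n$ and $\lambda\in\mathbb{C}$ with $\mathrm{Re}(\lambda)\ge0$ such that $(A-\lambda I)z=0$ and $Hz=0$. *)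

theory Defs
  imports "HOL-Analysis.Analysis"
begin

definition cmat :: "real^'c^'r \<Rightarrow> complex^'c^'r" where
  "cmat M = (\<chi> i j. complex_of_real (M $ i $ j))"

definition symmetric_mat :: "real^'n^'n \<Rightarrow> bool" where
  "symmetric_mat M \<longleftrightarrow> transpose M = M"

definition psd :: "real^'n^'n \<Rightarrow> bool" where
  "psd M \<longleftrightarrow> symmetric_mat M \<and> (\<forall>x. 0 \<le> x \<bullet> (M *v x))"

definition pd :: "real^'n^'n \<Rightarrow> bool" where
  "pd M \<longleftrightarrow> symmetric_mat M \<and> (\<forall>x. x \<noteq> 0 \<longrightarrow> 0 < x \<bullet> (M *v x))"

definition null_space :: "real^'c^'r \<Rightarrow> (real^'c) set" where
  "null_space M = {x. M *v x = 0}"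

definition block_mat :: "real^'n^'n \<Rightarrow> real^'m^'n \<Rightarrow> real^'m^'m \<Rightarrow> real^('n + 'm)^('n + 'm)" where
  "block_mat Q L R = (\<chi> i j. case i of
      Inl a \<Rightarrow> (case j of Inl b \<Rightarrow> Q $ a $ b | Inr b \<Rightarrow> L $ a $ b)
    | Inr a \<Rightarrow> (case j of Inl b \<Rightarrow> L $ b $ a | Inr b \<Rightarrow> R $ a $ b))"

definition detectable :: "real^'n^'n \<Rightarrow> real^'n^'n \<Rightarrow> bool" where
  "detectable H A \<longleftrightarrow> \<not> (\<exists>(z::complex^'n) (l::complex). z \<noteq> 0 \<and> 0 \<le> Re l \<and>
      (cmat A - (\<chi> i j. if i = j then l else 0)) *v z = 0 \<and> cmat H *v z = 0)"

definition Pi11 :: "nat \<Rightarrow> (nat \<Rightarrow> real^'n^'n) \<Rightarrow> real^'n^'n \<Rightarrow> real^'n^'n" where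
  "Pi11 r A0 X = (\<Sum>i=1..r. transpose (A0 i) ** X ** A0 i)"
definition Pi12 :: "nat \<Rightarrow> (nat \<Rightarrow> real^'n^'n) \<Rightarrow> (nat \<Rightarrow> real^'m^'n) \<Rightarrow> real^'n^'n \<Rightarrow> real^'m^'n" where
  "Pi12 r A0 B0 X = (\<Sum>i=1..r. transpose (A0 i) ** X ** B0 i)"
definition Pi22 :: "nat \<Rightarrow> (nat \<Rightarrow> real^'m^'n) \<Rightarrow> real^'n^'n \<Rightarrow> real^'m^'m" where
  "Pi22 r B0 X = (\<Sum>i=1..r. transpose (B0 i) ** X ** B0 i)"

definition Lc where "Lc L r A0 B0 X = L + Pi12 r A0 B0 X"
definition Rc where "Rc R r B0 X = R + Pi22 r B0 X"
definition Qc where "Qc Q r A0 X = Q + Pi11 r A0 X"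

definition Ac :: "real^'n^'n \<Rightarrow> real^'m^'n \<Rightarrow> real^'m^'n \<Rightarrow> real^'m^'m \<Rightarrow> nat \<Rightarrow>
   (nat \<Rightarrow> real^'n^'n) \<Rightarrow> (nat \<Rightarrow> real^'m^'n) \<Rightarrow> real^'n^'n \<Rightarrow> real^'n^'n" where
  "Ac A B L R r A0 B0 X = A - B ** matrix_inv (Rc R r B0 X) ** transpose (Lc L r A0 B0 X)"

definition Hc :: "real^'n^'n \<Rightarrow> real^'m^'n \<Rightarrow> real^'m^'m \<Rightarrow> nat \<Rightarrow>
   (nat \<Rightarrow> real^'n^'n) \<Rightarrow> (nat \<Rightarrow> real^'m^'n) \<Rightarrow> real^'n^'n \<Rightarrow> real^'n^'n" where
  "Hc Q L R r A0 B0 X = Qc Q r A0 X - Lc L r A0 B0 X ** matrix_inv (Rc R r B0 X) ** transpose (Lc L r A0 B0 X)"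

end

theory Submission
  imports Defs
begin

(* The compensated block matrix [[Qc, Lc], [Lc^T, Rc]] is [[Q, L], [L^T, R]] plus
   Pi(X) = sum_i [A0^i B0^i]^T X [A0^i B0^i], a sum of psd matrices, and Rc is positive definite;
   hence its Schur complement Hc is psd. If Hc x = 0, the quadratic form of the compensated matrix
   vanishes at (x, -Rc^-1 Lc^T x), hence so does that of [[Q, L], [L^T, R]], which puts x in the
   kernel of Q - L R^-1 L^T. The kernel hypothesis then gives L^T x = 0 and A0^i x = 0, so
   Lc^T x = 0 and Ac x = A x. Applied to the real and imaginary parts of an unstable eigenvector
   of Ac annihilated by Hc, this produces one of A annihilated by Q - L R^-1 L^T. *)

lemma transpose_add: "transpose (A + B) = transpose A + transpose (B::'a::semiring_1^'c^'r)"
  by (simp add: transpose_def vec_eq_iff)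

lemma transpose_diff: "transpose (A - B) = transpose A - transpose (B::'a::ring_1^'c^'r)"
  by (simp add: transpose_def vec_eq_iff)

lemma transpose_sum: "transpose (\<Sum>i\<in>I. f i) = (\<Sum>i\<in>I. transpose (f i :: 'a::semiring_1^'c^'r))"
  by (induction I rule: infinite_finite_induct) (auto simp: transpose_add transpose_def vec_eq_iff)

lemma matrix_vector_mult_sum_left:
  "(\<Sum>i\<in>I. f i) *v x = (\<Sum>i\<in>I. f i *v x :: 'a::semiring_1^'r)"
  by (induction I rule: infinite_finite_induct) (auto simp: matrix_vector_mult_add_rdistrib)

lemma matrix_vector_mult_uminus_right: "M *v (- v) = - (M *v v :: 'a::comm_ring_1^'r)"
  by (simp add: vec_eq_iff matrix_vector_mult_def sum_negf)

lemma inner_transpose_mult: "x \<bullet> (transpose M *v y) = (M *v x) \<bullet> (y :: real^'r)"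
  by (metis dot_lmul_matrix inner_commute transpose_matrix_vector)

lemma matrix_inv_right:
  fixes A :: "'a::semiring_1^'n^'m"
  assumes "invertible A" shows "A ** matrix_inv A = mat 1"
  using someI_ex[OF assms[unfolded invertible_def]] by (simp add: matrix_inv_def)

lemma matrix_inv_left:
  fixes A :: "'a::semiring_1^'n^'m"
  assumes "invertible A" shows "matrix_inv A ** A = mat 1"
  using someI_ex[OF assms[unfolded invertible_def]] by (simp add: matrix_inv_def)

lemma matrix_inv_right_vec:
  fixes A :: "real^'n^'m"
  assumes "invertible A" shows "A *v (matrix_inv A *v y) = y"
  by (simp add: matrix_vector_mul_assoc matrix_inv_right[OF assms])

lemma matrix_inv_left_vec:
  fixes A :: "real^'n^'m"
  assumes "invertible A" shows "matrix_inv A *v (A *v y) = y"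
  by (simp add: matrix_vector_mul_assoc matrix_inv_left[OF assms])

lemma symmetric_matrix_inv:
  fixes S :: "real^'n^'n"
  assumes "symmetric_mat S" "invertible S"
  shows "symmetric_mat (matrix_inv S)"
proof -
  have "transpose (matrix_inv S) ** S = mat 1"
    using arg_cong[OF matrix_inv_right[OF assms(2)], of transpose] assms(1)
    by (simp add: matrix_transpose_mul symmetric_mat_def)
  then have "transpose (matrix_inv S) = transpose (matrix_inv S) ** (S ** matrix_inv S)"
    by (simp add: matrix_inv_right[OF assms(2)])
  also have "\<dots> = matrix_inv S"
    by (simp add: matrix_mul_assoc \<open>transpose (matrix_inv S) ** S = mat 1\<close>)
  finally show ?thesis unfolding symmetric_mat_def .
qed

lemma symmetric_mat_congruence:
  fixes X :: "real^'n^'n" and G :: "real^'k^'n"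
  assumes "symmetric_mat X" shows "symmetric_mat (transpose G ** X ** G)"
  using assms by (simp add: symmetric_mat_def matrix_transpose_mul matrix_mul_assoc)

lemma psd_0: "psd (0::real^'n^'n)"
  by (simp add: psd_def symmetric_mat_def transpose_def vec_eq_iff)

lemma psd_add: "psd S \<Longrightarrow> psd T \<Longrightarrow> psd (S + T)"
  by (simp add: psd_def symmetric_mat_def transpose_add matrix_vector_mult_add_rdistrib
      inner_add_right add_nonneg_nonneg)

lemma psd_sum: "(\<And>i. i \<in> I \<Longrightarrow> psd (f i)) \<Longrightarrow> psd (\<Sum>i\<in>I. f i)"
  by (induction I rule: infinite_finite_induct) (auto simp: psd_0 psd_add)

lemma psd_congruence:
  fixes X :: "real^'n^'n" and G :: "real^'k^'n"
  assumes "psd X" shows "psd (transpose G ** X ** G)"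
proof -
  have "0 \<le> x \<bullet> ((transpose G ** X ** G) *v x)" for x
    using assms unfolding psd_def
    by (simp add: matrix_vector_mul_assoc[symmetric] inner_transpose_mult del: transpose_matrix_vector)
  then show ?thesis
    using assms symmetric_mat_congruence unfolding psd_def by blast
qed

lemma pd_add_psd: "pd R \<Longrightarrow> psd S \<Longrightarrow> pd (R + S)"
  by (simp add: pd_def psd_def symmetric_mat_def transpose_add matrix_vector_mult_add_rdistrib
      inner_add_right add_pos_nonneg)

lemma pd_invertible:
  fixes S :: "real^'n^'n"
  assumes "pd S" shows "invertible S"
proof -
  have "\<forall>x. S *v x = 0 \<longrightarrow> x = 0"
    using assms unfolding pd_def by (metis inner_zero_right less_irrefl)
  then show ?thesis using invertible_left_inverse matrix_left_invertible_ker by blast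
qed

lemma nonneg_quadratic_imp_linear_coeff_eq_0:
  fixes a c :: real
  assumes "\<And>t. 0 \<le> t * a + t\<^sup>2 * c"
  shows "a = 0"
proof -
  define k where "k = \<bar>c\<bar> + 1"
  have k: "k > 0" "c \<le> k - 1" unfolding k_def by auto
  have "0 \<le> (- a / k) * a + (- a / k)\<^sup>2 * c" by (rule assms)
  also have "\<dots> \<le> (- a / k) * a + (- a / k)\<^sup>2 * (k - 1)"
    using k by (intro add_left_mono mult_left_mono) auto
  also have "\<dots> = - (a / k)\<^sup>2"
    using k by (simp add: field_simps power2_eq_square)
  finally show "a = 0" using k by simp
qed

lemma psd_quadratic_form_eq_0_imp_kernel:
  fixes S :: "real^'n^'n"
  assumes "psd S" and "x \<bullet> (S *v x) = 0"
  shows "S *v x = 0"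
proof -
  let ?y = "S *v x"
  have sym: "x \<bullet> (S *v ?y) = ?y \<bullet> ?y"
    using assms(1) unfolding psd_def symmetric_mat_def by (metis inner_transpose_mult)
  have "0 \<le> t * (2 * (?y \<bullet> ?y)) + t\<^sup>2 * (?y \<bullet> (S *v ?y))" for t
  proof -
    have "0 \<le> (x + t *\<^sub>R ?y) \<bullet> (S *v (x + t *\<^sub>R ?y))"
      using assms(1) unfolding psd_def by blast
    also have "\<dots> = t * (2 * (?y \<bullet> ?y)) + t\<^sup>2 * (?y \<bullet> (S *v ?y))"
      using sym assms(2)
      by (simp add: matrix_vector_right_distrib matrix_vector_mult_scaleR inner_add_left inner_add_right
          inner_commute[of x] algebra_simps power2_eq_square)
    finally show ?thesis .
  qed
  then have "2 * (?y \<bullet> ?y) = 0" by (rule nonneg_quadratic_imp_linear_coeff_eq_0)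
  then show ?thesis by simp
qed

lemma psd_add_quadratic_form_eq_0_imp_kernel:
  fixes S T :: "real^'n^'n"
  assumes "psd S" "psd T" and "w \<bullet> ((S + T) *v w) = 0"
  shows "S *v w = 0"
proof -
  have "0 \<le> w \<bullet> (S *v w)" "0 \<le> w \<bullet> (T *v w)"
    using assms(1,2) unfolding psd_def by auto
  then have "w \<bullet> (S *v w) = 0"
    using assms(3) by (simp add: matrix_vector_mult_add_rdistrib inner_add_right)
  then show ?thesis by (rule psd_quadratic_form_eq_0_imp_kernel[OF assms(1)])
qed

lemma sum_UNIV_Plus: "(\<Sum>k\<in>UNIV. f k) = (\<Sum>a\<in>UNIV. f (Inl a)) + (\<Sum>b\<in>UNIV. f (Inr b))"
  for f :: "'n::finite + 'm::finite \<Rightarrow> 'a::comm_monoid_add"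
  using sum.Plus[of "UNIV :: 'n set" "UNIV :: 'm set" f] by (simp add: o_def)

definition join_vec :: "'a^'n \<Rightarrow> 'a^'m \<Rightarrow> 'a^('n + 'm)" where
  "join_vec x u = (\<chi> k. case k of Inl a \<Rightarrow> x $ a | Inr b \<Rightarrow> u $ b)"

lemma inner_join_vec: "join_vec x u \<bullet> join_vec y v = x \<bullet> y + u \<bullet> (v :: real^'m)"
  unfolding inner_vec_def join_vec_def sum_UNIV_Plus by simp

lemma join_vec_eq_0_iff: "join_vec x u = 0 \<longleftrightarrow> x = 0 \<and> u = 0"
  by (auto simp: join_vec_def vec_eq_iff split: sum.split)

lemma block_mat_mult_join_vec:
  "block_mat Q L R *v join_vec x u = join_vec (Q *v x + L *v u) (transpose L *v x + R *v u)"
  unfolding block_mat_def join_vec_def matrix_vector_mult_def sum_UNIV_Plus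
  by (simp add: transpose_def vec_eq_iff split: sum.split)

lemma block_mat_quadratic_form:
  "join_vec x u \<bullet> (block_mat Q L R *v join_vec x u)
     = x \<bullet> (Q *v x + L *v u) + u \<bullet> (transpose L *v x + R *v u)"
  by (simp only: block_mat_mult_join_vec inner_join_vec)

lemma symmetric_block_mat_iff:
  "symmetric_mat (block_mat Q L R) \<longleftrightarrow> symmetric_mat Q \<and> symmetric_mat R"
  unfolding symmetric_mat_def block_mat_def transpose_def
  by (auto simp: vec_eq_iff split: sum.split)

lemma block_mat_add:
  "block_mat (Q + Q') (L + L') (R + R') = block_mat Q L R + block_mat Q' L' R'"
  by (simp add: block_mat_def vec_eq_iff split: sum.split)

lemma block_mat_sum:
  "block_mat (\<Sum>i\<in>I. Q i) (\<Sum>i\<in>I. L i) (\<Sum>i\<in>I. R i) = (\<Sum>i\<in>I. block_mat (Q i) (L i) (R i))"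
  by (simp add: block_mat_def vec_eq_iff sum_component split: sum.split)

definition hcat :: "'a^'n^'k \<Rightarrow> 'a^'m^'k \<Rightarrow> 'a^('n + 'm)^'k" where
  "hcat A B = (\<chi> i k. case k of Inl a \<Rightarrow> A $ i $ a | Inr b \<Rightarrow> B $ i $ b)"

lemma block_mat_congruence:
  fixes X :: "real^'k^'k" and A :: "real^'n^'k" and B :: "real^'m^'k"
  assumes "symmetric_mat X"
  shows "block_mat (transpose A ** X ** A) (transpose A ** X ** B) (transpose B ** X ** B)
    = transpose (hcat A B) ** X ** hcat A B"
proof -
  have X: "X $ i $ j = X $ j $ i" for i j
    using assms unfolding symmetric_mat_def by (metis transpose_def vec_lambda_beta)
  \<comment> \<open>the off-diagonal block, entrywise: (A^T X B)^T = B^T X A needs X symmetric\<close>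
  have "(\<Sum>k\<in>UNIV. (\<Sum>j\<in>UNIV. A $ j $ a * X $ j $ k) * B $ k $ b)
      = (\<Sum>k\<in>UNIV. (\<Sum>j\<in>UNIV. B $ j $ b * X $ j $ k) * A $ k $ a)" for a b
    unfolding sum_distrib_right by (subst sum.swap) (simp add: X mult_ac)
  then show ?thesis
    by (simp add: block_mat_def hcat_def matrix_matrix_mult_def transpose_def vec_eq_iff
        split: sum.split)
qed

lemma schur_complement_quadratic_form:
  fixes Q :: "real^'n^'n" and L :: "real^'m^'n" and R :: "real^'m^'m" and x :: "real^'n"
  assumes "invertible R"
  defines "u \<equiv> - (matrix_inv R *v (transpose L *v x))"
  shows "x \<bullet> ((Q - L ** matrix_inv R ** transpose L) *v x)
    = join_vec x u \<bullet> (block_mat Q L R *v join_vec x u)"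
proof -
  have "transpose L *v x + R *v u = 0"
    unfolding u_def
    by (simp add: matrix_vector_mult_uminus_right matrix_inv_right_vec[OF assms(1)]
        del: transpose_matrix_vector)
  moreover have "Q *v x + L *v u = (Q - L ** matrix_inv R ** transpose L) *v x"
    unfolding u_def
    by (simp add: matrix_vector_mult_uminus_right matrix_vector_mult_diff_rdistrib
        matrix_vector_mul_assoc[symmetric] del: transpose_matrix_vector)
  ultimately show ?thesis
    unfolding block_mat_quadratic_form by simp
qed

lemma psd_schur_complement:
  fixes Q :: "real^'n^'n" and L :: "real^'m^'n" and R :: "real^'m^'m"
  assumes "psd (block_mat Q L R)" and "invertible R"
  shows "psd (Q - L ** matrix_inv R ** transpose L)"
proof -
  have "symmetric_mat Q" "symmetric_mat R"
    using assms(1) unfolding psd_def symmetric_block_mat_iff by auto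
  then have "symmetric_mat (Q - L ** matrix_inv R ** transpose L)"
    using symmetric_matrix_inv[OF _ assms(2)]
    by (simp add: symmetric_mat_def transpose_diff matrix_transpose_mul matrix_mul_assoc)
  moreover have "0 \<le> x \<bullet> ((Q - L ** matrix_inv R ** transpose L) *v x)" for x
    using assms unfolding schur_complement_quadratic_form[OF assms(2)] psd_def by blast
  ultimately show ?thesis unfolding psd_def by blast
qed

lemma block_mat_kernel_imp_schur_complement_kernel:
  fixes Q :: "real^'n^'n" and L :: "real^'m^'n" and R :: "real^'m^'m"
  assumes "invertible R" and "block_mat Q L R *v join_vec x u = 0"
  shows "(Q - L ** matrix_inv R ** transpose L) *v x = 0"
proof -
  have Qx: "Q *v x + L *v u = 0" and Lx: "transpose L *v x + R *v u = 0"
    using assms(2) unfolding block_mat_mult_join_vec join_vec_eq_0_iff by auto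
  have "R *v u = - (transpose L *v x)"
    using Lx by (simp add: eq_neg_iff_add_eq_0 add.commute del: transpose_matrix_vector)
  have "u = matrix_inv R *v (R *v u)"
    by (simp add: matrix_inv_left_vec[OF assms(1)])
  also have "\<dots> = - (matrix_inv R *v (transpose L *v x))"
    unfolding \<open>R *v u = - (transpose L *v x)\<close> by (rule matrix_vector_mult_uminus_right)
  finally have "L *v u = - ((L ** matrix_inv R ** transpose L) *v x)"
    by (simp add: matrix_vector_mult_uminus_right matrix_vector_mul_assoc[symmetric]
        del: transpose_matrix_vector)
  then show ?thesis
    using Qx by (simp add: matrix_vector_mult_diff_rdistrib)
qed

lemma cmat_mult_vec:
  "cmat M *v z = (\<chi> i. Complex ((M *v (\<chi> j. Re (z $ j))) $ i) ((M *v (\<chi> j. Im (z $ j))) $ i))"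
  by (simp add: vec_eq_iff matrix_vector_mult_def cmat_def complex_eq_iff Re_sum Im_sum)

lemma detectable_transfer:
  fixes H A H' A' :: "real^'n^'n"
  assumes "detectable H A"
    and kernel: "\<And>x. H' *v x = 0 \<Longrightarrow> H *v x = 0 \<and> A' *v x = A *v x"
  shows "detectable H' A'"
  unfolding detectable_def
proof (rule notI, elim exE conjE)
  fix z :: "complex^'n" and l :: complex
  assume "z \<noteq> 0" "0 \<le> Re l"
    and eigen: "(cmat A' - (\<chi> i j. if i = j then l else 0)) *v z = 0"
    and "cmat H' *v z = 0"
  define x where "x = (\<chi> j. Re (z $ j))"
  define y where "y = (\<chi> j. Im (z $ j))"
  have "H' *v x = 0" "H' *v y = 0"
    using \<open>cmat H' *v z = 0\<close> unfolding cmat_mult_vec x_def[symmetric] y_def[symmetric]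
    by (auto simp: vec_eq_iff complex_eq_iff)
  then have "H *v x = 0" "A' *v x = A *v x" "H *v y = 0" "A' *v y = A *v y"
    using kernel by auto
  then have "cmat A' *v z = cmat A *v z" and "cmat H *v z = 0"
    unfolding cmat_mult_vec x_def[symmetric] y_def[symmetric]
    by (auto simp: vec_eq_iff complex_eq_iff)
  moreover from eigen have "(cmat A - (\<chi> i j. if i = j then l else 0)) *v z = 0"
    using \<open>cmat A' *v z = cmat A *v z\<close> by (simp add: matrix_vector_mult_diff_rdistrib)
  ultimately show False
    using assms(1) \<open>z \<noteq> 0\<close> \<open>0 \<le> Re l\<close> unfolding detectable_def by blast
qed

definition Pi_block ::
    "nat \<Rightarrow> (nat \<Rightarrow> real^'n^'n) \<Rightarrow> (nat \<Rightarrow> real^'m^'n) \<Rightarrow> real^'n^'n \<Rightarrow> real^('n + 'm)^('n + 'm)"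
  where "Pi_block r A0 B0 X = block_mat (Pi11 r A0 X) (Pi12 r A0 B0 X) (Pi22 r B0 X)"

lemma block_mat_Qc_Lc_Rc:
  "block_mat (Qc Q r A0 X) (Lc L r A0 B0 X) (Rc R r B0 X) = block_mat Q L R + Pi_block r A0 B0 X"
  unfolding Qc_def Lc_def Rc_def Pi_block_def by (rule block_mat_add)

lemma psd_Pi_block:
  assumes "psd X" shows "psd (Pi_block r A0 B0 X)"
proof -
  have "Pi_block r A0 B0 X = (\<Sum>i=1..r. transpose (hcat (A0 i) (B0 i)) ** X ** hcat (A0 i) (B0 i))"
    using assms unfolding psd_def Pi_block_def Pi11_def Pi12_def Pi22_def block_mat_sum
    by (simp add: block_mat_congruence)
  then show ?thesis
    using assms by (simp add: psd_sum psd_congruence)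
qed

lemma pd_Rc: "pd R \<Longrightarrow> psd X \<Longrightarrow> pd (Rc R r B0 X)"
  unfolding Rc_def Pi22_def by (intro pd_add_psd psd_sum psd_congruence)

lemma psd_Hc:
  assumes "pd R" "psd (block_mat Q L R)" "psd X"
  shows "psd (Hc Q L R r A0 B0 X)"
proof -
  have "psd (block_mat (Qc Q r A0 X) (Lc L r A0 B0 X) (Rc R r B0 X))"
    unfolding block_mat_Qc_Lc_Rc using assms(2,3) by (intro psd_add psd_Pi_block)
  then show ?thesis
    unfolding Hc_def by (rule psd_schur_complement[OF _ pd_invertible[OF pd_Rc[OF assms(1,3)]]])
qed

lemma transpose_Lc_mult_vec:
  assumes "\<And>i. i \<in> {1..r} \<Longrightarrow> A0 i *v x = 0"
  shows "transpose (Lc L r A0 B0 X) *v x = transpose L *v x"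
proof -
  have "transpose (Lc L r A0 B0 X) *v x
      = transpose L *v x + (\<Sum>i=1..r. transpose (B0 i) *v (transpose X *v (A0 i *v x)))"
    unfolding Lc_def Pi12_def
    by (simp only: transpose_add transpose_sum matrix_vector_mult_add_rdistrib
        matrix_vector_mult_sum_left matrix_transpose_mul matrix_vector_mul_assoc transpose_transpose)
  then show ?thesis using assms by simp
qed

lemma Hc_kernel:
  fixes A Q :: "real^'n^'n" and B L :: "real^'m^'n" and R :: "real^'m^'m"
  assumes "pd R" "psd (block_mat Q L R)" "psd X"
    and kernel_subset: "null_space (Q - L ** matrix_inv R ** transpose L)
           \<subseteq> null_space (transpose L) \<inter> (\<Inter>i\<in>{1..r}. null_space (A0 i))"
    and "Hc Q L R r A0 B0 X *v x = 0"
  shows "(Q - L ** matrix_inv R ** transpose L) *v x = 0 \<and> Ac A B L R r A0 B0 X *v x = A *v x"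
proof -
  define u where "u = - (matrix_inv (Rc R r B0 X) *v (transpose (Lc L r A0 B0 X) *v x))"
  have "join_vec x u \<bullet> (block_mat (Qc Q r A0 X) (Lc L r A0 B0 X) (Rc R r B0 X) *v join_vec x u)
      = x \<bullet> (Hc Q L R r A0 B0 X *v x)"
    unfolding u_def Hc_def
    by (rule schur_complement_quadratic_form[symmetric, OF pd_invertible[OF pd_Rc[OF assms(1,3)]]])
  also have "\<dots> = 0" using assms(5) by simp
  finally have "block_mat Q L R *v join_vec x u = 0"
    unfolding block_mat_Qc_Lc_Rc
    by (rule psd_add_quadratic_form_eq_0_imp_kernel[OF assms(2) psd_Pi_block[OF assms(3)]])
  then have H: "(Q - L ** matrix_inv R ** transpose L) *v x = 0"
    by (rule block_mat_kernel_imp_schur_complement_kernel[OF pd_invertible[OF assms(1)]])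
  then have "transpose L *v x = 0" and "\<And>i. i \<in> {1..r} \<Longrightarrow> A0 i *v x = 0"
    using kernel_subset unfolding null_space_def by auto
  then have "transpose (Lc L r A0 B0 X) *v x = 0"
    using transpose_Lc_mult_vec by metis
  then have "Ac A B L R r A0 B0 X *v x = A *v x"
    unfolding Ac_def
    by (simp add: matrix_vector_mult_diff_rdistrib matrix_vector_mul_assoc[symmetric])
  with H show ?thesis by blast
qed

theorem lemma2p2:
  fixes A Q :: "real^'n^'n" and B L :: "real^'m^'n" and R :: "real^'m^'m"
    and r :: nat and A0 :: "nat \<Rightarrow> real^'n^'n" and B0 :: "nat \<Rightarrow> real^'m^'n"
  assumes "pd R"
    and "psd (block_mat Q L R)"
    and "null_space (Q - L ** matrix_inv R ** transpose L)
           \<subseteq> null_space (transpose L) \<inter> (\<Inter>i\<in>{1..r}. null_space (A0 i))"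
    and "detectable (Q - L ** matrix_inv R ** transpose L) A"
  shows "\<forall>X::real^'n^'n. psd X \<longrightarrow>
           detectable (Hc Q L R r A0 B0 X) (Ac A B L R r A0 B0 X) \<and> psd (Hc Q L R r A0 B0 X)"
proof (intro allI impI conjI)
  fix X :: "real^'n^'n"
  assume "psd X"
  show "detectable (Hc Q L R r A0 B0 X) (Ac A B L R r A0 B0 X)"
    using assms(4) Hc_kernel[OF assms(1,2) \<open>psd X\<close> assms(3)] by (rule detectable_transfer)
  show "psd (Hc Q L R r A0 B0 X)"
    using assms(1,2) \<open>psd X\<close> by (rule psd_Hc)
qed

end
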